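(* Let $k$ and $n$ be positive integers and let $\ell$ be a positive divisor of $n$. Then in $\mathbb{Q}((T))$, $$\mathbf{B}^k(\ell T)\,\mathbf{B}(nT)=\ell^{k}T^{k}\,\mathbf{B}(nT)\,f^{(k)}_{\ell,n}(e^T)+\frac{n}{\ell}\,\mathbf{B}^{k+1}(\ell T)\,h^{(k)}_{\ell,n}(e^T).$$
   Context: $\mathbf{B}(T)=T/(e^T-1)\in\mathbb{Q}[[T]]$, $\mathbf{B}(cT)=cT/(e^{cT}-1)$ for $0\ne c\in\mathbb{Q}$, and $\mathbf{B}^j(cT)=(\mathbf{B}(cT))^j$. For positive integers $k,n$, the polynomials $h^{(k)}_{1,n},f^{(k)}_{1,n}\in\mathbb{Q}[X]$ are the (unique) polynomials with $\deg h^{(k)}_{1,n}<k$ and $\deg f^{(k)}_{1,n}<n-1$ such that $$\frac{1}{(X-1)^k(1+X+\cdots+X^{n-1})}=\frac{h^{(k)}_{1,n}}{(X-1)^k}+\frac{f^{(k)}_{1,n}}{1+X+\cdots+X^{n-1}}.$$ For a positive divisor $\ell$ of $n$, set $h^{(k)}_{\ell,n}=h^{(k)}_{1,n/\ell}(X^\ell)$ and $f^{(k)}_{\ell,n}=f^{(k)}_{1,n/\ell}(X^\ell)$. *)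

theory Defs
  imports "HOL-Computational_Algebra.Computational_Algebra"
begin

text \<open>B(cT) = cT/(e^{cT}-1) in Q[[T]] (exact division of formal power series).\<close>
definition Bser :: "rat \<Rightarrow> rat fps" where
  "Bser c = fps_const c * fps_X / (fps_exp c - 1)"

definition Phi :: "nat \<Rightarrow> rat poly" where
  "Phi n = (\<Sum>i<n. monom 1 i)"

definition hf1 :: "nat \<Rightarrow> nat \<Rightarrow> rat poly \<times> rat poly" where
  "hf1 k n = (THE p. (fst p = 0 \<or> degree (fst p) < k) \<and>
                     (snd p = 0 \<or> degree (snd p) < n - 1) \<and>
                     Fract 1 ([:-1, 1:] ^ k * Phi n)
                       = Fract (fst p) ([:-1, 1:] ^ k) + Fract (snd p) (Phi n))"

definition h_poly :: "nat \<Rightarrow> nat \<Rightarrow> nat \<Rightarrow> rat poly" where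
  "h_poly k l n = pcompose (fst (hf1 k (n div l))) (monom 1 l)"

definition f_poly :: "nat \<Rightarrow> nat \<Rightarrow> nat \<Rightarrow> rat poly" where
  "f_poly k l n = pcompose (snd (hf1 k (n div l))) (monom 1 l)"

definition eval_exp :: "rat poly \<Rightarrow> rat fps" where
  "eval_exp p = poly (map_poly fps_const p) (fps_exp 1)"

end

theory Submission
  imports Defs "HOL-Computational_Algebra.Field_as_Ring"
begin

text \<open>With m = n/l, the defining partial fraction identity of h and f is the B\'ezout relation
  h * Phi_m + f * (X - 1)^k = 1. Evaluate it at X = e^(lT) and multiply by B^k(lT) B(nT).
  Since B(cT) (e^(cT) - 1) = cT, the second summand becomes (lT)^k B(nT) f(e^(lT)); since
  Phi_m(e^(lT)) (e^(lT) - 1) = e^(nT) - 1, we get B(nT) Phi_m(e^(lT)) = m B(lT), which turns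
  the first summand into (n/l) B^(k+1)(lT) h(e^(lT)).\<close>

definition poly_fps :: "'a::comm_ring_1 poly \<Rightarrow> 'a fps \<Rightarrow> 'a fps" where
  "poly_fps p y = poly (map_poly fps_const p) y"

lemma poly_fps_pCons [simp]: "poly_fps (pCons a p) y = fps_const a + y * poly_fps p y"
  by (simp add: poly_fps_def map_poly_pCons)

lemma poly_fps_0 [simp]: "poly_fps 0 y = 0"
  by (simp add: poly_fps_def)

lemma poly_fps_1 [simp]: "poly_fps 1 y = 1"
  by (simp add: poly_fps_def)

lemma poly_fps_add [simp]: "poly_fps (p + q) y = poly_fps p y + poly_fps q y"
proof (induction p arbitrary: q)
  case (pCons a p)
  then show ?case
    by (cases q rule: pCons_cases) (simp add: algebra_simps)
qed simp

lemma poly_fps_smult [simp]: "poly_fps (smult a p) y = fps_const a * poly_fps p y"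
  by (induction p) (simp_all add: algebra_simps)

lemma poly_fps_mult [simp]: "poly_fps (p * q) y = poly_fps p y * poly_fps q y"
  by (induction p) (simp_all add: algebra_simps)

lemma poly_fps_diff [simp]: "poly_fps (p - q) y = poly_fps p y - poly_fps q y"
  using poly_fps_add[of "p - q" q y] by (simp add: algebra_simps)

lemma poly_fps_power [simp]: "poly_fps (p ^ j) y = poly_fps p y ^ j"
  by (induction j) simp_all

lemma poly_fps_monom_1 [simp]: "poly_fps (monom 1 i) y = y ^ i"
  by (simp add: poly_fps_def map_poly_monom poly_monom)

lemma poly_fps_X_minus_1: "poly_fps [:-1, 1:] y = y - 1"
  by simp

lemma poly_fps_pcompose: "poly_fps (pcompose p q) y = poly_fps p (poly_fps q y)"
  by (induction p) (simp_all add: pcompose_pCons)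

lemma eval_exp_pcompose_monom:
  "eval_exp (pcompose p (monom 1 l)) = poly_fps p (fps_exp (of_nat l))"
  by (simp add: eval_exp_def poly_fps_def[symmetric] poly_fps_pcompose fps_exp_power_mult)

lemma subdegree_exp_minus_1:
  fixes c :: "'a::field_char_0"
  assumes "c \<noteq> 0" shows "subdegree (fps_exp c - 1) = 1"
  using assms by (intro subdegreeI) auto

lemma Bser_mult_exp_minus_1:
  assumes "c \<noteq> 0"
  shows "Bser c * (fps_exp c - 1) = fps_const c * fps_X"
proof -
  have nz: "fps_exp c - 1 \<noteq> (0 :: rat fps)"
    using subdegree_exp_minus_1[OF assms] by auto
  have "fps_exp c - 1 dvd fps_const c * fps_X"
    using fps_dvd_iff[OF nz] subdegree_exp_minus_1[OF assms] assms by simp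
  then show ?thesis by (simp add: Bser_def)
qed

lemma Bser_power_mult_exp_minus_1_power:
  assumes "c \<noteq> 0"
  shows "Bser c ^ k * (fps_exp c - 1) ^ k = fps_const (c ^ k) * fps_X ^ k"
proof -
  have "Bser c ^ k * (fps_exp c - 1) ^ k = (fps_const c * fps_X) ^ k"
    by (simp add: power_mult_distrib[symmetric] Bser_mult_exp_minus_1[OF assms])
  then show ?thesis
    by (simp only: power_mult_distrib fps_const_power)
qed

lemma Phi_times_X_minus_1: "Phi m * [:-1, 1:] = monom 1 m - 1"
proof -
  have "[:0, 1 :: rat:] - 1 = [:-1, 1:]" by (simp add: one_pCons)
  then show ?thesis
    using power_diff_1_eq[of "[:0, 1 :: rat:]" m]
    by (simp add: Phi_def monom_altdef mult.commute)
qed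

lemma poly_Phi_1: "poly (Phi m) 1 = of_nat m"
  by (simp add: Phi_def poly_sum poly_monom)

lemma degree_Phi: "degree (Phi m) = m - 1"
proof (cases "m = 0")
  case False
  then have "Phi m \<noteq> 0" using poly_Phi_1[of m] by auto
  then have "degree (Phi m) + 1 = degree (Phi m * [:-1, 1:])"
    by (subst degree_mult_eq) auto
  also have "\<dots> = degree (monom (1 :: rat) m - 1)"
    by (simp only: Phi_times_X_minus_1)
  also have "\<dots> = m"
    using False degree_add_eq_left[of "-1" "monom (1 :: rat) m"] by (simp add: degree_monom_eq)
  finally show ?thesis by simp
qed (simp add: Phi_def)

lemma coprime_X_minus_1_power_Phi:
  assumes "m > 0" shows "coprime ([:-1, 1:] ^ k) (Phi m)"
proof -
  have "\<not> [:-1, 1:] dvd Phi m"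
    using poly_Phi_1[of m] assms by (simp add: dvd_iff_poly_eq_0)
  moreover have "prime_elem [:-1, 1 :: rat:]"
    by (rule prime_elem_linear_field_poly) simp
  ultimately have "coprime [:-1, 1:] (Phi m)"
    by (rule prime_elem_imp_coprime[rotated])
  then show ?thesis by simp
qed

definition reduced_bezout :: "'a::field_gcd poly \<Rightarrow> 'a poly \<Rightarrow> 'a poly \<times> 'a poly \<Rightarrow> bool" where
  "reduced_bezout A P hf \<longleftrightarrow>
     (fst hf = 0 \<or> degree (fst hf) < degree A) \<and> (snd hf = 0 \<or> degree (snd hf) < degree P) \<and>
     fst hf * P + snd hf * A = 1"

lemma reduced_bezout_exists:
  fixes A P :: "'a::field_gcd poly"
  assumes "coprime A P" and "degree A > 0"
  shows "\<exists>hf. reduced_bezout A P hf"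
proof -
  have "P \<noteq> 0"
    using assms by (metis coprime_0_right_iff is_unit_iff_degree less_irrefl not_is_unit_0)
  obtain u v where uv: "u * A + v * P = 1"
    using bezout_coefficients_fst_snd[of A P] assms(1) by (metis coprime_imp_gcd_eq_1)
  define f where "f = u mod P"
  define h where "h = v + (u div P) * A"
  have "h * P + f * A = ((u div P) * P + f) * A + v * P"
    by (simp add: h_def algebra_simps)
  also have "\<dots> = 1"
    using uv by (simp add: f_def)
  finally have eq: "h * P + f * A = 1" .
  have f_deg: "f = 0 \<or> degree f < degree P"
    using degree_mod_less[OF \<open>P \<noteq> 0\<close>] by (simp add: f_def)
  have "degree h < degree A" if "h \<noteq> 0"
  proof -
    have hP: "h * P = 1 - f * A"
      using eq by (simp add: algebra_simps)
    have "degree h + degree P = degree (h * P)"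
      using \<open>h \<noteq> 0\<close> \<open>P \<noteq> 0\<close> by (simp add: degree_mult_eq)
    also have "\<dots> = degree (1 - f * A)"
      by (simp only: hP)
    also have "\<dots> \<le> max 0 (degree (f * A))"
      using degree_diff_le_max[of 1 "f * A"] by simp
    finally show ?thesis
      using f_deg assms(2) degree_mult_le[of f A] by auto
  qed
  then have "reduced_bezout A P (h, f)"
    using eq f_deg by (auto simp: reduced_bezout_def)
  then show ?thesis ..
qed

lemma reduced_bezout_unique:
  fixes A P :: "'a::field_gcd poly"
  assumes "coprime A P" and "reduced_bezout A P (h1, f1)" and "reduced_bezout A P (h2, f2)"
  shows "(h1, f1) = (h2, f2)"
proof -
  have diff: "(h1 - h2) * P = (f2 - f1) * A"
    using assms(2,3) by (simp add: reduced_bezout_def algebra_simps)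
  then have "A dvd (h1 - h2) * P" by simp
  with assms(1) have "A dvd h1 - h2" by (simp add: coprime_dvd_mult_left_iff)
  moreover have "h1 - h2 = 0 \<or> degree (h1 - h2) < degree A"
    using assms(2,3) degree_diff_le_max[of h1 h2] by (auto simp: reduced_bezout_def)
  ultimately have "h1 = h2"
    using dvd_imp_degree_le[of A "h1 - h2"] by force
  moreover have "A \<noteq> 0" using assms(2) by (auto simp: reduced_bezout_def)
  ultimately show ?thesis using diff by simp
qed

lemma Fract_partial_fraction_iff:
  fixes A P h f :: "'a::idom"
  assumes "A \<noteq> 0" and "P \<noteq> 0"
  shows "Fract 1 (A * P) = Fract h A + Fract f P \<longleftrightarrow> h * P + f * A = 1"
  using assms by (simp add: eq_fract mult.commute)

lemma hf1_bezout:
  assumes "k > 0" and "m > 0"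
  shows "fst (hf1 k m) * Phi m + snd (hf1 k m) * [:-1, 1:] ^ k = 1"
proof -
  let ?A = "[:-1, 1 :: rat:] ^ k"
  have "Phi m \<noteq> 0" using poly_Phi_1[of m] assms by auto
  have "?A \<noteq> 0" by simp
  then have "hf1 k m = (THE hf. reduced_bezout ?A (Phi m) hf)"
    unfolding hf1_def reduced_bezout_def
    by (simp only: Fract_partial_fraction_iff[OF \<open>?A \<noteq> 0\<close> \<open>Phi m \<noteq> 0\<close>] degree_linear_power degree_Phi)
  moreover have "\<exists>!hf. reduced_bezout ?A (Phi m) hf"
  proof (rule ex_ex1I)
    show "\<exists>hf. reduced_bezout ?A (Phi m) hf"
      using reduced_bezout_exists[OF coprime_X_minus_1_power_Phi[OF assms(2)]] assms(1)
      by (simp add: degree_linear_power)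
  qed (metis reduced_bezout_unique[OF coprime_X_minus_1_power_Phi[OF assms(2)]] prod.collapse)
  ultimately have "reduced_bezout ?A (Phi m) (hf1 k m)"
    using theI' by metis
  then show ?thesis by (simp add: reduced_bezout_def)
qed

lemma Bser_mult_poly_Phi:
  assumes "c \<noteq> 0" and "m > 0"
  shows "Bser (of_nat m * c) * poly_fps (Phi m) (fps_exp c) = fps_const (of_nat m) * Bser c"
proof -
  let ?E = "fps_exp c"
  have "?E - 1 \<noteq> 0"
    using subdegree_exp_minus_1[OF assms(1)] by auto
  have "poly_fps (Phi m) ?E * (?E - 1) = poly_fps (Phi m * [:-1, 1:]) ?E"
    by (simp only: poly_fps_mult poly_fps_X_minus_1)
  also have "\<dots> = fps_exp (of_nat m * c) - 1"
    by (simp only: Phi_times_X_minus_1 poly_fps_diff poly_fps_monom_1 poly_fps_1 fps_exp_power_mult)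
  finally have "Bser (of_nat m * c) * poly_fps (Phi m) ?E * (?E - 1)
      = Bser (of_nat m * c) * (fps_exp (of_nat m * c) - 1)"
    by (simp add: mult.assoc)
  also have "\<dots> = fps_const (of_nat m) * (Bser c * (?E - 1))"
    using assms by (simp add: Bser_mult_exp_minus_1)
  finally show ?thesis
    using \<open>?E - 1 \<noteq> 0\<close> by (simp add: mult.assoc)
qed

theorem mainTheorem5:
  fixes k n l :: nat
  assumes "k > 0" and "n > 0" and "l > 0" and "l dvd n"
  shows "Bser (of_nat l) ^ k * Bser (of_nat n)
       = fps_const (of_nat l ^ k) * fps_X ^ k * Bser (of_nat n) * eval_exp (f_poly k l n)
         + fps_const (of_nat n / of_nat l) * Bser (of_nat l) ^ (k + 1) * eval_exp (h_poly k l n)"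
proof -
  define m where "m = n div l"
  have n_eq: "of_nat n = of_nat m * (of_nat l :: rat)" and "m > 0"
    using assms by (auto simp: m_def)
  define L :: rat where "L = of_nat l"
  have L: "L \<noteq> 0" using assms(3) by (simp add: L_def)
  define E where "E = fps_exp L"
  let ?B = "Bser L" and ?P = "poly_fps (Phi m) E"
  let ?H = "poly_fps (fst (hf1 k m)) E" and ?F = "poly_fps (snd (hf1 k m)) E"
  have bezout: "?H * ?P + ?F * (E - 1) ^ k = 1"
    using arg_cong[OF hf1_bezout[OF assms(1) \<open>m > 0\<close>], of "\<lambda>p. poly_fps p E"]
    by (simp only: poly_fps_add poly_fps_mult poly_fps_power poly_fps_X_minus_1 poly_fps_1)
  have ratio: "Bser (of_nat n) * ?P = fps_const (of_nat n / of_nat l) * ?B"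
    using Bser_mult_poly_Phi[OF L \<open>m > 0\<close>] L by (simp add: n_eq E_def L_def)
  have "?B ^ k * Bser (of_nat n) = ?B ^ k * Bser (of_nat n) * (?H * ?P + ?F * (E - 1) ^ k)"
    by (simp add: bezout)
  also have "\<dots> = (Bser (of_nat n) * ?P) * ?B ^ k * ?H + (?B ^ k * (E - 1) ^ k) * Bser (of_nat n) * ?F"
    by (simp add: algebra_simps)
  also have "\<dots> = fps_const (L ^ k) * fps_X ^ k * Bser (of_nat n) * ?F
      + fps_const (of_nat n / of_nat l) * ?B ^ (k + 1) * ?H"
    unfolding ratio Bser_power_mult_exp_minus_1_power[OF L, folded E_def] by (simp add: algebra_simps)
  finally show ?thesis
    by (simp add: h_poly_def f_poly_def eval_exp_pcompose_monom m_def E_def L_def)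
qed

end
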